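(* Let $\mathcal{Q}$ be a small involutive quantaloid and $\mathbb{A}$ a symmetric $\mathcal{Q}$-category. The following are equivalent: (1) $\mathbb{A}$ is symmetrically complete, i.e. for every symmetric $\mathcal{Q}$-category $\mathbb{B}$, the map $F\mapsto\mathbb{A}(-,F-)$ from the ordered set of functors $\mathbb{B}\to\mathbb{A}$ to the ordered set of symmetric left adjoint distributors $\mathbb{B}\to\mathbb{A}$ is an equivalence; (2) for every symmetric $\mathcal{Q}$-category $\mathbb{B}$, every symmetric left adjoint distributor $\Phi\colon\mathbb{B}\to\mathbb{A}$ is representable; (3) for every $X\in\mathcal{Q}_0$, every symmetric left adjoint presheaf $\phi\colon *_X\to\mathbb{A}$ is representable.
   Context: A quantaloid is a category enriched in $\mathsf{Sup}$; an involution is an identity-on-objects, direction-reversing, monotone map $f\mapsto f^{\mathsf o}$ on morphisms with $(g\circ f)^{\mathsf o}=f^{\mathsf o}\circ g^{\mathsf o}$, $f^{\mathsf{oo}}=f$. A $\mathcal{Q}$-category $\mathbb{A}$: objects $\mathbb{A}_0$ with types $tx$, homs $\mathbb{A}(y,x)\colon tx\to ty$ with $\mathbb{A}(z,y)\circ\mathbb{A}(y,x)\le\mathbb{A}(z,x)$, $1_{tx}\le\mathbb{A}(x,x)$; symmetric if $\mathbb{A}(x,y)=\mathbb{A}(y,x)^{\mathsf o}$. A functor $F\colon\mathbb{B}\to\mathbb{A}$ is a type-preserving object map with $\mathbb{B}(y,x)\le\mathbb{A}(Fy,Fx)$; functors are preordered by $F\le G$ iff $1_{tx}\le\mathbb{A}(Fx,Gx)$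 for all $x$. A distributor $\Phi\colon\mathbb{B}\to\mathbb{A}$: arrows $\Phi(a,b)\colon tb\to ta$ with $\mathbb{A}(a',a)\circ\Phi(a,b)\le\Phi(a',b)$ and $\Phi(a,b)\circ\mathbb{B}(b,b')\le\Phi(a,b')$; composition $(\Psi\otimes\Phi)(z,x)=\bigvee_y\Psi(z,y)\circ\Phi(y,x)$, identities the hom-families, elementwise order. $\Phi$ is a left adjoint with right adjoint $\Phi^*$ if $\mathbb{B}\le\Phi^*\otimes\Phi$, $\Phi\otimes\Phi^*\le\mathbb{A}$. For symmetric $\mathbb{A},\mathbb{B}$, $\Phi^{\mathsf o}\colon\mathbb{A}\to\mathbb{B}$ is $\Phi^{\mathsf o}(b,a)=\Phi(a,b)^{\mathsf o}$, and $\Phi$ is a symmetric left adjoint if it is left adjoint to $\Phi^{\mathsf o}$. $\Phi$ is representable if $\Phi=\mathbb{A}(-,F-)$ (elements $\mathbb{A}(a,Fb)$) for some functor $F$. $*_X$ is the one-object $\mathcal{Q}$-category of type $X$ with hom $1_X$; a presheaf is a distributor $*_X\to\mathbb{A}$. *)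

theory Defs
  imports Main
begin

text \<open>Every element of 'm is
a morphism with domain qdom and codomain qcod; qcomp g f is g after f; qsup X Y S is
the supremum of a set S of arrows X to Y in the hom-sup-lattice; qinv is the involution.\<close>

record ('o, 'm) quantaloid =
  qdom  :: "'m \<Rightarrow> 'o"
  qcod  :: "'m \<Rightarrow> 'o"
  qcomp :: "'m \<Rightarrow> 'm \<Rightarrow> 'm"
  qid   :: "'o \<Rightarrow> 'm"
  qle   :: "'m \<Rightarrow> 'm \<Rightarrow> bool"
  qsup  :: "'o \<Rightarrow> 'o \<Rightarrow> 'm set \<Rightarrow> 'm"
  qinv  :: "'m \<Rightarrow> 'm"

definition qhom :: "('o, 'm) quantaloid \<Rightarrow> 'o \<Rightarrow> 'o \<Rightarrow> 'm set" where
  "qhom Q X Y = {f. qdom Q f = X \<and> qcod Q f = Y}"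

definition is_quantaloid :: "('o, 'm) quantaloid \<Rightarrow> bool" where
  "is_quantaloid Q \<longleftrightarrow>
     \<comment> \<open>category structure\<close>
     (\<forall>X. qdom Q (qid Q X) = X \<and> qcod Q (qid Q X) = X) \<and>
     (\<forall>f g. qdom Q g = qcod Q f \<longrightarrow>
        qdom Q (qcomp Q g f) = qdom Q f \<and> qcod Q (qcomp Q g f) = qcod Q g) \<and>
     (\<forall>f. qcomp Q f (qid Q (qdom Q f)) = f \<and> qcomp Q (qid Q (qcod Q f)) f = f) \<and>
     (\<forall>f g h. qdom Q g = qcod Q f \<and> qdom Q h = qcod Q g \<longrightarrow>
        qcomp Q h (qcomp Q g f) = qcomp Q (qcomp Q h g) f) \<and>
     \<comment> \<open>each hom-set is partially ordered\<close>
     (\<forall>f g. qle Q f g \<longrightarrow> qdom Q f = qdom Q g \<and> qcod Q f = qcod Q g) \<and>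
     (\<forall>f. qle Q f f) \<and>
     (\<forall>f g. qle Q f g \<and> qle Q g f \<longrightarrow> f = g) \<and>
     (\<forall>f g h. qle Q f g \<and> qle Q g h \<longrightarrow> qle Q f h) \<and>
     \<comment> \<open>each hom-set is a complete lattice (all suprema exist)\<close>
     (\<forall>X Y S. S \<subseteq> qhom Q X Y \<longrightarrow>
        qsup Q X Y S \<in> qhom Q X Y \<and>
        (\<forall>f\<in>S. qle Q f (qsup Q X Y S)) \<and>
        (\<forall>g\<in>qhom Q X Y. (\<forall>f\<in>S. qle Q f g) \<longrightarrow> qle Q (qsup Q X Y S) g)) \<and>
     \<comment> \<open>composition preserves suprema in each variable (Sup-enrichment)\<close>
     (\<forall>X Y Z S g. S \<subseteq> qhom Q X Y \<and> g \<in> qhom Q Y Z \<longrightarrow>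
        qcomp Q g (qsup Q X Y S) = qsup Q X Z (qcomp Q g ` S)) \<and>
     (\<forall>X Y Z S f. f \<in> qhom Q X Y \<and> S \<subseteq> qhom Q Y Z \<longrightarrow>
        qcomp Q (qsup Q Y Z S) f = qsup Q X Z ((\<lambda>g. qcomp Q g f) ` S))"

definition is_involutive_quantaloid :: "('o, 'm) quantaloid \<Rightarrow> bool" where
  "is_involutive_quantaloid Q \<longleftrightarrow> is_quantaloid Q \<and>
     (\<forall>f. qdom Q (qinv Q f) = qcod Q f \<and> qcod Q (qinv Q f) = qdom Q f) \<and>
     (\<forall>f g. qle Q f g \<longrightarrow> qle Q (qinv Q f) (qinv Q g)) \<and>
     (\<forall>f g. qdom Q g = qcod Q f \<longrightarrow> qinv Q (qcomp Q g f) = qcomp Q (qinv Q f) (qinv Q g)) \<and>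
     (\<forall>f. qinv Q (qinv Q f) = f)"

text \<open>A Q-category: a set of objects qobj, types qty, homs qhm y x : ty x \<rightarrow> ty y.\<close>

record ('a, 'o, 'm) qcat =
  qobj :: "'a set"
  qty  :: "'a \<Rightarrow> 'o"
  qhm  :: "'a \<Rightarrow> 'a \<Rightarrow> 'm"

definition is_qcat :: "('o, 'm) quantaloid \<Rightarrow> ('a, 'o, 'm) qcat \<Rightarrow> bool" where
  "is_qcat Q A \<longleftrightarrow>
     (\<forall>x\<in>qobj A. \<forall>y\<in>qobj A. qhm A y x \<in> qhom Q (qty A x) (qty A y)) \<and>
     (\<forall>x\<in>qobj A. \<forall>y\<in>qobj A. \<forall>z\<in>qobj A.
        qle Q (qcomp Q (qhm A z y) (qhm A y x)) (qhm A z x)) \<and>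
     (\<forall>x\<in>qobj A. qle Q (qid Q (qty A x)) (qhm A x x))"

definition is_symmetric_qcat :: "('o, 'm) quantaloid \<Rightarrow> ('a, 'o, 'm) qcat \<Rightarrow> bool" where
  "is_symmetric_qcat Q A \<longleftrightarrow> is_qcat Q A \<and>
     (\<forall>x\<in>qobj A. \<forall>y\<in>qobj A. qhm A x y = qinv Q (qhm A y x))"

definition is_qfunctor ::
  "('o, 'm) quantaloid \<Rightarrow> ('b, 'o, 'm) qcat \<Rightarrow> ('a, 'o, 'm) qcat \<Rightarrow> ('b \<Rightarrow> 'a) \<Rightarrow> bool" where
  "is_qfunctor Q B A F \<longleftrightarrow>
     (\<forall>x\<in>qobj B. F x \<in> qobj A \<and> qty A (F x) = qty B x) \<and>
     (\<forall>x\<in>qobj B. \<forall>y\<in>qobj B. qle Q (qhm B y x) (qhm A (F y) (F x)))"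

definition qfunctor_le ::
  "('o, 'm) quantaloid \<Rightarrow> ('b, 'o, 'm) qcat \<Rightarrow> ('a, 'o, 'm) qcat \<Rightarrow> ('b \<Rightarrow> 'a) \<Rightarrow> ('b \<Rightarrow> 'a) \<Rightarrow> bool" where
  "qfunctor_le Q B A F G \<longleftrightarrow> (\<forall>x\<in>qobj B. qle Q (qid Q (qty B x)) (qhm A (F x) (G x)))"

text \<open>Distributors \<Phi> : B \<rightarrow> A, given by elements \<Phi> a b : ty b \<rightarrow> ty a.\<close>

definition is_distributor ::
  "('o, 'm) quantaloid \<Rightarrow> ('b, 'o, 'm) qcat \<Rightarrow> ('a, 'o, 'm) qcat \<Rightarrow> ('a \<Rightarrow> 'b \<Rightarrow> 'm) \<Rightarrow> bool" where
  "is_distributor Q B A \<Phi> \<longleftrightarrow>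
     (\<forall>a\<in>qobj A. \<forall>b\<in>qobj B. \<Phi> a b \<in> qhom Q (qty B b) (qty A a)) \<and>
     (\<forall>a\<in>qobj A. \<forall>a'\<in>qobj A. \<forall>b\<in>qobj B. qle Q (qcomp Q (qhm A a' a) (\<Phi> a b)) (\<Phi> a' b)) \<and>
     (\<forall>a\<in>qobj A. \<forall>b\<in>qobj B. \<forall>b'\<in>qobj B. qle Q (qcomp Q (\<Phi> a b) (qhm B b b')) (\<Phi> a b'))"

definition dist_le ::
  "('o, 'm) quantaloid \<Rightarrow> ('b, 'o, 'm) qcat \<Rightarrow> ('a, 'o, 'm) qcat \<Rightarrow>
   ('a \<Rightarrow> 'b \<Rightarrow> 'm) \<Rightarrow> ('a \<Rightarrow> 'b \<Rightarrow> 'm) \<Rightarrow> bool" where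
  "dist_le Q B A \<Phi> \<Psi> \<longleftrightarrow> (\<forall>a\<in>qobj A. \<forall>b\<in>qobj B. qle Q (\<Phi> a b) (\<Psi> a b))"

definition dist_comp ::
  "('o, 'm) quantaloid \<Rightarrow> ('c, 'o, 'm) qcat \<Rightarrow> ('b, 'o, 'm) qcat \<Rightarrow> ('a, 'o, 'm) qcat \<Rightarrow>
   ('a \<Rightarrow> 'b \<Rightarrow> 'm) \<Rightarrow> ('b \<Rightarrow> 'c \<Rightarrow> 'm) \<Rightarrow> ('a \<Rightarrow> 'c \<Rightarrow> 'm)" where
  "dist_comp Q C B A \<Psi> \<Phi> = (\<lambda>z x. qsup Q (qty C x) (qty A z)
       ((\<lambda>y. qcomp Q (\<Psi> z y) (\<Phi> y x)) ` qobj B))"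

definition dist_left_adjoint ::
  "('o, 'm) quantaloid \<Rightarrow> ('b, 'o, 'm) qcat \<Rightarrow> ('a, 'o, 'm) qcat \<Rightarrow>
   ('a \<Rightarrow> 'b \<Rightarrow> 'm) \<Rightarrow> ('b \<Rightarrow> 'a \<Rightarrow> 'm) \<Rightarrow> bool" where
  "dist_left_adjoint Q B A \<Phi> \<Psi> \<longleftrightarrow>
     is_distributor Q B A \<Phi> \<and> is_distributor Q A B \<Psi> \<and>
     dist_le Q B B (qhm B) (dist_comp Q B A B \<Psi> \<Phi>) \<and>
     dist_le Q A A (dist_comp Q A B A \<Phi> \<Psi>) (qhm A)"

definition dist_op :: "('o, 'm) quantaloid \<Rightarrow> ('a \<Rightarrow> 'b \<Rightarrow> 'm) \<Rightarrow> ('b \<Rightarrow> 'a \<Rightarrow> 'm)" where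
  "dist_op Q \<Phi> = (\<lambda>b a. qinv Q (\<Phi> a b))"

definition sym_left_adjoint ::
  "('o, 'm) quantaloid \<Rightarrow> ('b, 'o, 'm) qcat \<Rightarrow> ('a, 'o, 'm) qcat \<Rightarrow> ('a \<Rightarrow> 'b \<Rightarrow> 'm) \<Rightarrow> bool" where
  "sym_left_adjoint Q B A \<Phi> \<longleftrightarrow> dist_left_adjoint Q B A \<Phi> (dist_op Q \<Phi>)"

definition repr_dist :: "('a, 'o, 'm) qcat \<Rightarrow> ('b \<Rightarrow> 'a) \<Rightarrow> ('a \<Rightarrow> 'b \<Rightarrow> 'm)" where
  "repr_dist A F = (\<lambda>a b. qhm A a (F b))"

definition representable ::
  "('o, 'm) quantaloid \<Rightarrow> ('b, 'o, 'm) qcat \<Rightarrow> ('a, 'o, 'm) qcat \<Rightarrow> ('a \<Rightarrow> 'b \<Rightarrow> 'm) \<Rightarrow> bool" where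
  "representable Q B A \<Phi> \<longleftrightarrow>
     (\<exists>F. is_qfunctor Q B A F \<and> (\<forall>a\<in>qobj A. \<forall>b\<in>qobj B. \<Phi> a b = repr_dist A F a b))"

definition star_cat :: "('o, 'm) quantaloid \<Rightarrow> 'o \<Rightarrow> (unit, 'o, 'm) qcat" where
  "star_cat Q X = \<lparr>qobj = {()}, qty = (\<lambda>_. X), qhm = (\<lambda>_ _. qid Q X)\<rparr>"

text \<open>Symmetric completeness relative to symmetric Q-categories B whose objects live in
  the type 'b: the map F \<mapsto> A(-,F-) from functors B \<rightarrow> A to symmetric left adjoint
  distributors B \<rightarrow> A is well defined and an equivalence of preordered sets
  (order-preserving, order-reflecting, essentially surjective).\<close>

definition sym_complete_wrt ::
  "('o, 'm) quantaloid \<Rightarrow> ('a, 'o, 'm) qcat \<Rightarrow> ('b, 'o, 'm) qcat \<Rightarrow> bool" where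
  "sym_complete_wrt Q A B \<longleftrightarrow>
     (\<forall>F. is_qfunctor Q B A F \<longrightarrow> sym_left_adjoint Q B A (repr_dist A F)) \<and>
     (\<forall>F G. is_qfunctor Q B A F \<longrightarrow> is_qfunctor Q B A G \<longrightarrow>
        (qfunctor_le Q B A F G \<longleftrightarrow> dist_le Q B A (repr_dist A F) (repr_dist A G))) \<and>
     (\<forall>\<Phi>. sym_left_adjoint Q B A \<Phi> \<longrightarrow>
        (\<exists>F. is_qfunctor Q B A F \<and>
             dist_le Q B A (repr_dist A F) \<Phi> \<and> dist_le Q B A \<Phi> (repr_dist A F)))"

end

theory Submission
  imports Defs
begin

text \<open>The assignment \<open>F \<mapsto> A(-,F-)\<close> always lands in the symmetric left adjoints (their right
  adjoint \<open>A(F-,-)\<close> is the opposite of \<open>A(-,F-)\<close> by symmetry of \<open>A\<close>) and, by the Yoneda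
  argument, reflects and preserves the order; so it is an equivalence precisely when every
  symmetric left adjoint is representable. Presheaves are the case of a one-object \<open>B\<close>.
  Conversely, every column \<open>\<Phi>(-,b)\<close> of a symmetric left adjoint \<open>\<Phi>\<close> is again a symmetric left
  adjoint presheaf; if these are represented by objects \<open>F b\<close>, then \<open>b \<mapsto> F b\<close> is automatically
  a functor with \<open>\<Phi> = A(-,F-)\<close>.\<close>

context
  fixes Q :: "('o, 'm) quantaloid"
  assumes quantaloid: "is_quantaloid Q"
begin

lemma qle_refl: "qle Q f f"
  using quantaloid unfolding is_quantaloid_def by meson

lemma qle_antisym: "qle Q f g \<Longrightarrow> qle Q g f \<Longrightarrow> f = g"
  using quantaloid unfolding is_quantaloid_def by meson

lemma qle_trans: "qle Q f g \<Longrightarrow> qle Q g h \<Longrightarrow> qle Q f h"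
  using quantaloid unfolding is_quantaloid_def by meson

lemma qle_hom:
  assumes "qle Q f g" and "f \<in> qhom Q X Y"
  shows "g \<in> qhom Q X Y"
proof -
  have "qdom Q f = qdom Q g \<and> qcod Q f = qcod Q g"
    using quantaloid assms(1) unfolding is_quantaloid_def by meson
  with assms(2) show ?thesis
    by (simp add: qhom_def)
qed

lemma qsup_upper: "S \<subseteq> qhom Q X Y \<Longrightarrow> f \<in> S \<Longrightarrow> qle Q f (qsup Q X Y S)"
  using quantaloid unfolding is_quantaloid_def by meson

lemma qsup_least:
  "S \<subseteq> qhom Q X Y \<Longrightarrow> g \<in> qhom Q X Y \<Longrightarrow> (\<And>f. f \<in> S \<Longrightarrow> qle Q f g) \<Longrightarrow> qle Q (qsup Q X Y S) g"
  using quantaloid unfolding is_quantaloid_def by meson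

lemma qcomp_qsup_right:
  "S \<subseteq> qhom Q X Y \<Longrightarrow> g \<in> qhom Q Y Z \<Longrightarrow> qcomp Q g (qsup Q X Y S) = qsup Q X Z (qcomp Q g ` S)"
  using quantaloid unfolding is_quantaloid_def by meson

lemma qcomp_qsup_left:
  "f \<in> qhom Q X Y \<Longrightarrow> S \<subseteq> qhom Q Y Z \<Longrightarrow>
    qcomp Q (qsup Q Y Z S) f = qsup Q X Z ((\<lambda>g. qcomp Q g f) ` S)"
  using quantaloid unfolding is_quantaloid_def by meson

lemma qid_hom: "qid Q X \<in> qhom Q X X"
  using quantaloid unfolding is_quantaloid_def qhom_def mem_Collect_eq by meson

lemma qcomp_hom: "f \<in> qhom Q X Y \<Longrightarrow> g \<in> qhom Q Y Z \<Longrightarrow> qcomp Q g f \<in> qhom Q X Z"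
  using quantaloid unfolding is_quantaloid_def qhom_def mem_Collect_eq by meson

lemma qcomp_id_right: "f \<in> qhom Q X Y \<Longrightarrow> qcomp Q f (qid Q X) = f"
  using quantaloid unfolding is_quantaloid_def qhom_def mem_Collect_eq by meson

lemma qcomp_id_left: "f \<in> qhom Q X Y \<Longrightarrow> qcomp Q (qid Q Y) f = f"
  using quantaloid unfolding is_quantaloid_def qhom_def mem_Collect_eq by meson

lemma qsup_pair_eq:
  assumes "f \<in> qhom Q X Y" and "qle Q f g"
  shows "qsup Q X Y {f, g} = g"
proof -
  have "g \<in> qhom Q X Y" using assms qle_hom by blast
  with assms show ?thesis
    by (intro qle_antisym qsup_least qsup_upper) (auto intro: qle_refl)
qed

text \<open>Monotonicity of composition is the binary case of its preservation of suprema.\<close>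

lemma qcomp_mono_right:
  assumes f: "f \<in> qhom Q X Y" and g: "g \<in> qhom Q Y Z" and le: "qle Q f f'"
  shows "qle Q (qcomp Q g f) (qcomp Q g f')"
proof -
  have f': "f' \<in> qhom Q X Y" using f le qle_hom by blast
  have "qcomp Q g f' = qsup Q X Z {qcomp Q g f, qcomp Q g f'}"
    using qcomp_qsup_right[of "{f, f'}" X Y g Z] qsup_pair_eq[OF f le] f f' g by simp
  then show ?thesis
    using qsup_upper[of "{qcomp Q g f, qcomp Q g f'}" X Z] qcomp_hom f f' g by auto
qed

lemma qcomp_mono_left:
  assumes f: "f \<in> qhom Q X Y" and g: "g \<in> qhom Q Y Z" and le: "qle Q g g'"
  shows "qle Q (qcomp Q g f) (qcomp Q g' f)"
proof -
  have g': "g' \<in> qhom Q Y Z" using g le qle_hom by blast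
  have "qcomp Q g' f = qsup Q X Z {qcomp Q g f, qcomp Q g' f}"
    using qcomp_qsup_left[of f X Y "{g, g'}" Z] qsup_pair_eq[OF g le] f g g' by simp
  then show ?thesis
    using qsup_upper[of "{qcomp Q g f, qcomp Q g' f}" X Z] qcomp_hom f g g' by auto
qed

lemma le_qcomp_right_if_id_le:
  "f \<in> qhom Q X Y \<Longrightarrow> qle Q (qid Q X) h \<Longrightarrow> qle Q f (qcomp Q f h)"
  using qcomp_mono_right[OF qid_hom] qcomp_id_right by metis

lemma le_qcomp_left_if_id_le:
  "f \<in> qhom Q X Y \<Longrightarrow> qle Q (qid Q Y) h \<Longrightarrow> qle Q f (qcomp Q h f)"
  using qcomp_mono_left[OF _ qid_hom] qcomp_id_left by metis

end

lemma qinv_qid: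
  assumes "is_involutive_quantaloid Q"
  shows "qinv Q (qid Q X) = qid Q X"
proof -
  have quantaloid: "is_quantaloid Q"
    and inv_hom: "\<And>f. qdom Q (qinv Q f) = qcod Q f \<and> qcod Q (qinv Q f) = qdom Q f"
    and inv_comp: "\<And>f g. qdom Q g = qcod Q f \<Longrightarrow> qinv Q (qcomp Q g f) = qcomp Q (qinv Q f) (qinv Q g)"
    and inv_inv: "\<And>f. qinv Q (qinv Q f) = f"
    using assms unfolding is_involutive_quantaloid_def by meson+
  let ?i = "qinv Q (qid Q X)"
  have i: "?i \<in> qhom Q X X"
    using inv_hom qid_hom[OF quantaloid] unfolding qhom_def by auto
  then have "qdom Q ?i = qcod Q (qid Q X)"
    using qid_hom[OF quantaloid] by (simp add: qhom_def)
  then have "qinv Q (qcomp Q ?i (qid Q X)) = qcomp Q (qinv Q (qid Q X)) (qinv Q ?i)"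
    by (rule inv_comp)
  then show ?thesis
    using qcomp_id_right[OF quantaloid i] inv_inv by simp
qed

lemma qcat_hom: "is_qcat Q A \<Longrightarrow> x \<in> qobj A \<Longrightarrow> y \<in> qobj A \<Longrightarrow> qhm A y x \<in> qhom Q (qty A x) (qty A y)"
  unfolding is_qcat_def by blast

lemma qcat_comp_le:
  "is_qcat Q A \<Longrightarrow> x \<in> qobj A \<Longrightarrow> y \<in> qobj A \<Longrightarrow> z \<in> qobj A \<Longrightarrow>
    qle Q (qcomp Q (qhm A z y) (qhm A y x)) (qhm A z x)"
  unfolding is_qcat_def by blast

lemma qcat_id_le: "is_qcat Q A \<Longrightarrow> x \<in> qobj A \<Longrightarrow> qle Q (qid Q (qty A x)) (qhm A x x)"
  unfolding is_qcat_def by blast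

lemma symmetric_qcat_is_qcat: "is_symmetric_qcat Q A \<Longrightarrow> is_qcat Q A"
  unfolding is_symmetric_qcat_def by blast

lemma symmetric_qcat_hm:
  "is_symmetric_qcat Q A \<Longrightarrow> x \<in> qobj A \<Longrightarrow> y \<in> qobj A \<Longrightarrow> qhm A x y = qinv Q (qhm A y x)"
  unfolding is_symmetric_qcat_def by blast

lemma qfunctor_obj: "is_qfunctor Q B A F \<Longrightarrow> b \<in> qobj B \<Longrightarrow> F b \<in> qobj A \<and> qty A (F b) = qty B b"
  unfolding is_qfunctor_def by blast

lemma qfunctor_hm_le:
  "is_qfunctor Q B A F \<Longrightarrow> x \<in> qobj B \<Longrightarrow> y \<in> qobj B \<Longrightarrow> qle Q (qhm B y x) (qhm A (F y) (F x))"
  unfolding is_qfunctor_def by blast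

lemma distributor_hom:
  "is_distributor Q B A \<Phi> \<Longrightarrow> a \<in> qobj A \<Longrightarrow> b \<in> qobj B \<Longrightarrow> \<Phi> a b \<in> qhom Q (qty B b) (qty A a)"
  unfolding is_distributor_def by blast

lemma distributor_comp_right_le:
  "is_distributor Q B A \<Phi> \<Longrightarrow> a \<in> qobj A \<Longrightarrow> b \<in> qobj B \<Longrightarrow> b' \<in> qobj B \<Longrightarrow>
    qle Q (qcomp Q (\<Phi> a b) (qhm B b b')) (\<Phi> a b')"
  unfolding is_distributor_def by blast

definition corepr_dist :: "('a, 'o, 'm) qcat \<Rightarrow> ('b \<Rightarrow> 'a) \<Rightarrow> ('b \<Rightarrow> 'a \<Rightarrow> 'm)" where
  "corepr_dist A F = (\<lambda>b a. qhm A (F b) a)"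

context
  fixes Q :: "('o, 'm) quantaloid" and A :: "('a, 'o, 'm) qcat" and B :: "('b, 'o, 'm) qcat"
    and F :: "'b \<Rightarrow> 'a"
  assumes quantaloid: "is_quantaloid Q" and A: "is_qcat Q A" and B: "is_qcat Q B"
    and F: "is_qfunctor Q B A F"
  notes [trans] = qle_trans[OF quantaloid]
begin

lemma qhm_functor_hom:
  "a \<in> qobj A \<Longrightarrow> b \<in> qobj B \<Longrightarrow> qhm A a (F b) \<in> qhom Q (qty B b) (qty A a)"
  "a \<in> qobj A \<Longrightarrow> b \<in> qobj B \<Longrightarrow> qhm A (F b) a \<in> qhom Q (qty A a) (qty B b)"
  using qcat_hom[OF A] qfunctor_obj[OF F] by metis+

lemma is_distributor_repr_dist: "is_distributor Q B A (repr_dist A F)"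
  unfolding is_distributor_def repr_dist_def
proof (intro conjI ballI)
  fix a b assume "a \<in> qobj A" "b \<in> qobj B"
  then show "qhm A a (F b) \<in> qhom Q (qty B b) (qty A a)"
    by (rule qhm_functor_hom)
next
  fix a a' b assume "a \<in> qobj A" "a' \<in> qobj A" "b \<in> qobj B"
  then show "qle Q (qcomp Q (qhm A a' a) (qhm A a (F b))) (qhm A a' (F b))"
    using qcat_comp_le[OF A] qfunctor_obj[OF F] by blast
next
  fix a b b' assume a: "a \<in> qobj A" and b: "b \<in> qobj B" and b': "b' \<in> qobj B"
  have "qle Q (qcomp Q (qhm A a (F b)) (qhm B b b')) (qcomp Q (qhm A a (F b)) (qhm A (F b) (F b')))"
    using qcomp_mono_right[OF quantaloid qcat_hom[OF B b' b] qhm_functor_hom(1)[OF a b]]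
      qfunctor_hm_le[OF F b' b] .
  also have "qle Q \<dots> (qhm A a (F b'))"
    using qcat_comp_le[OF A] qfunctor_obj[OF F] a b b' by blast
  finally show "qle Q (qcomp Q (qhm A a (F b)) (qhm B b b')) (qhm A a (F b'))" .
qed

lemma is_distributor_corepr_dist: "is_distributor Q A B (corepr_dist A F)"
  unfolding is_distributor_def corepr_dist_def
proof (intro conjI ballI)
  fix a b assume "b \<in> qobj A" "a \<in> qobj B"
  then show "qhm A (F a) b \<in> qhom Q (qty A b) (qty B a)"
    by (rule qhm_functor_hom)
next
  fix b b' a assume b: "b \<in> qobj B" and b': "b' \<in> qobj B" and a: "a \<in> qobj A"
  have "qle Q (qcomp Q (qhm B b' b) (qhm A (F b) a)) (qcomp Q (qhm A (F b') (F b)) (qhm A (F b) a))"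
    using qcomp_mono_left[OF quantaloid qhm_functor_hom(2)[OF a b] qcat_hom[OF B b b']]
      qfunctor_hm_le[OF F b b'] .
  also have "qle Q \<dots> (qhm A (F b') a)"
    using qcat_comp_le[OF A] qfunctor_obj[OF F] a b b' by blast
  finally show "qle Q (qcomp Q (qhm B b' b) (qhm A (F b) a)) (qhm A (F b') a)" .
next
  fix b a a' assume "b \<in> qobj B" "a \<in> qobj A" "a' \<in> qobj A"
  then show "qle Q (qcomp Q (qhm A (F b) a) (qhm A a a')) (qhm A (F b) a')"
    using qcat_comp_le[OF A] qfunctor_obj[OF F] by blast
qed

lemma repr_dist_unit:
  "dist_le Q B B (qhm B) (dist_comp Q B A B (corepr_dist A F) (repr_dist A F))"
  unfolding dist_le_def dist_comp_def corepr_dist_def repr_dist_def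
proof (intro ballI)
  fix b b' assume b: "b \<in> qobj B" and b': "b' \<in> qobj B"
  let ?S = "(\<lambda>y. qcomp Q (qhm A (F b) y) (qhm A y (F b'))) ` qobj A"
  have S: "?S \<subseteq> qhom Q (qty B b') (qty B b)"
    using qcomp_hom[OF quantaloid qhm_functor_hom(1) qhm_functor_hom(2)] b b' by auto
  have "qle Q (qhm B b b') (qhm A (F b) (F b'))"
    using qfunctor_hm_le[OF F b' b] .
  also have "qle Q \<dots> (qcomp Q (qhm A (F b) (F b')) (qhm A (F b') (F b')))"
    using le_qcomp_right_if_id_le[OF quantaloid] qhm_functor_hom(2)[OF _ b] qcat_id_le[OF A]
      qfunctor_obj[OF F b'] by metis
  also have "qle Q \<dots> (qsup Q (qty B b') (qty B b) ?S)"
    using qsup_upper[OF quantaloid S] qfunctor_obj[OF F b'] by blast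
  finally show "qle Q (qhm B b b') (qsup Q (qty B b') (qty B b) ?S)" .
qed

lemma repr_dist_counit:
  "dist_le Q A A (dist_comp Q A B A (repr_dist A F) (corepr_dist A F)) (qhm A)"
  unfolding dist_le_def dist_comp_def corepr_dist_def repr_dist_def
proof (intro ballI)
  fix a a' assume a: "a \<in> qobj A" and a': "a' \<in> qobj A"
  let ?S = "(\<lambda>y. qcomp Q (qhm A a (F y)) (qhm A (F y) a')) ` qobj B"
  have S: "?S \<subseteq> qhom Q (qty A a') (qty A a)"
    using qcomp_hom[OF quantaloid qhm_functor_hom(2) qhm_functor_hom(1)] a a' by auto
  have "qle Q f (qhm A a a')" if "f \<in> ?S" for f
    using that qcat_comp_le[OF A a' _ a] qfunctor_obj[OF F] by auto
  then show "qle Q (qsup Q (qty A a') (qty A a) ?S) (qhm A a a')"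
    using qsup_least[OF quantaloid S qcat_hom[OF A a' a]] by blast
qed

lemma repr_dist_left_adjoint: "dist_left_adjoint Q B A (repr_dist A F) (corepr_dist A F)"
  unfolding dist_left_adjoint_def
  using is_distributor_repr_dist is_distributor_corepr_dist repr_dist_unit repr_dist_counit by blast

end

lemma dist_left_adjoint_cong:
  assumes "\<And>a b. a \<in> qobj A \<Longrightarrow> b \<in> qobj B \<Longrightarrow> \<Psi> b a = \<Psi>' b a"
  shows "dist_left_adjoint Q B A \<Phi> \<Psi> \<longleftrightarrow> dist_left_adjoint Q B A \<Phi> \<Psi>'"
  using assms
  unfolding dist_left_adjoint_def is_distributor_def dist_le_def dist_comp_def
  by (simp cong: image_cong)

lemma repr_dist_sym_left_adjoint:
  assumes quantaloid: "is_quantaloid Q" and A: "is_symmetric_qcat Q A" and B: "is_qcat Q B"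
    and F: "is_qfunctor Q B A F"
  shows "sym_left_adjoint Q B A (repr_dist A F)"
proof -
  have "dist_op Q (repr_dist A F) b a = corepr_dist A F b a" if "a \<in> qobj A" "b \<in> qobj B" for a b
  proof -
    have "qhm A (F b) a = qinv Q (qhm A a (F b))"
      using symmetric_qcat_hm[OF A] qfunctor_obj[OF F] that by blast
    then show ?thesis
      by (simp add: dist_op_def repr_dist_def corepr_dist_def)
  qed
  then have "dist_left_adjoint Q B A (repr_dist A F) (dist_op Q (repr_dist A F)) \<longleftrightarrow>
      dist_left_adjoint Q B A (repr_dist A F) (corepr_dist A F)"
    by (rule dist_left_adjoint_cong)
  then show ?thesis
    unfolding sym_left_adjoint_def
    using repr_dist_left_adjoint[OF quantaloid symmetric_qcat_is_qcat[OF A] B F] by blast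
qed

lemma qfunctor_le_iff_repr_dist_le:
  assumes quantaloid: "is_quantaloid Q" and A: "is_qcat Q A"
    and F: "is_qfunctor Q B A F" and G: "is_qfunctor Q B A G"
  shows "qfunctor_le Q B A F G \<longleftrightarrow> dist_le Q B A (repr_dist A F) (repr_dist A G)"
proof
  assume le: "qfunctor_le Q B A F G"
  show "dist_le Q B A (repr_dist A F) (repr_dist A G)"
    unfolding dist_le_def repr_dist_def
  proof (intro ballI)
    fix a b assume a: "a \<in> qobj A" and b: "b \<in> qobj B"
    note [trans] = qle_trans[OF quantaloid]
    have "qle Q (qhm A a (F b)) (qcomp Q (qhm A a (F b)) (qhm A (F b) (G b)))"
      using le_qcomp_right_if_id_le[OF quantaloid] qcat_hom[OF A] qfunctor_obj[OF F b] le a b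
      unfolding qfunctor_le_def by metis
    also have "qle Q \<dots> (qhm A a (G b))"
      using qcat_comp_le[OF A] a qfunctor_obj[OF F b] qfunctor_obj[OF G b] by blast
    finally show "qle Q (qhm A a (F b)) (qhm A a (G b))" .
  qed
next
  assume le: "dist_le Q B A (repr_dist A F) (repr_dist A G)"
  show "qfunctor_le Q B A F G"
    unfolding qfunctor_le_def
  proof
    fix b assume b: "b \<in> qobj B"
    note [trans] = qle_trans[OF quantaloid]
    have "qle Q (qid Q (qty B b)) (qhm A (F b) (F b))"
      using qcat_id_le[OF A] qfunctor_obj[OF F b] by metis
    also have "qle Q \<dots> (qhm A (F b) (G b))"
      using le qfunctor_obj[OF F b] b unfolding dist_le_def repr_dist_def by blast
    finally show "qle Q (qid Q (qty B b)) (qhm A (F b) (G b))" .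
  qed
qed

lemma sym_complete_wrt_iff_representable:
  assumes quantaloid: "is_quantaloid Q" and A: "is_symmetric_qcat Q A" and B: "is_qcat Q B"
  shows "sym_complete_wrt Q A B \<longleftrightarrow>
    (\<forall>\<Phi>. sym_left_adjoint Q B A \<Phi> \<longrightarrow> representable Q B A \<Phi>)"
proof -
  have "(\<forall>a\<in>qobj A. \<forall>b\<in>qobj B. \<Phi> a b = repr_dist A F a b) \<longleftrightarrow>
      dist_le Q B A (repr_dist A F) \<Phi> \<and> dist_le Q B A \<Phi> (repr_dist A F)" for \<Phi> F
    unfolding dist_le_def by (auto intro: qle_antisym[OF quantaloid] simp: qle_refl[OF quantaloid])
  then have "representable Q B A \<Phi> \<longleftrightarrow>
      (\<exists>F. is_qfunctor Q B A F \<and> dist_le Q B A (repr_dist A F) \<Phi> \<and> dist_le Q B A \<Phi> (repr_dist A F))"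
    for \<Phi>
    unfolding representable_def by blast
  then show ?thesis
    unfolding sym_complete_wrt_def
    using repr_dist_sym_left_adjoint[OF quantaloid A B]
      qfunctor_le_iff_repr_dist_le[OF quantaloid symmetric_qcat_is_qcat[OF A]] by blast
qed

text \<open>\<open>star_cat\<close> with its single object renamed to \<open>u\<close>, so that it can live in any object type.\<close>

definition point_cat :: "('o, 'm) quantaloid \<Rightarrow> 'o \<Rightarrow> 'b \<Rightarrow> ('b, 'o, 'm) qcat" where
  "point_cat Q X u = \<lparr>qobj = {u}, qty = (\<lambda>_. X), qhm = (\<lambda>_ _. qid Q X)\<rparr>"

lemma star_cat_eq_point_cat: "star_cat Q X = point_cat Q X ()"
  by (simp add: star_cat_def point_cat_def)

lemma is_qcat_point_cat:
  assumes "is_quantaloid Q"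
  shows "is_qcat Q (point_cat Q X u)"
  using qid_hom[OF assms] qcomp_id_right[OF assms qid_hom[OF assms]] qle_refl[OF assms]
  by (simp add: is_qcat_def point_cat_def)

lemma is_symmetric_qcat_point_cat:
  assumes "is_involutive_quantaloid Q"
  shows "is_symmetric_qcat Q (point_cat Q X u)"
proof -
  have "is_quantaloid Q"
    using assms by (simp add: is_involutive_quantaloid_def)
  then show ?thesis
    unfolding is_symmetric_qcat_def
    using is_qcat_point_cat qinv_qid[OF assms] by (simp add: point_cat_def)
qed

lemma representable_point_cat_iff:
  assumes A: "is_qcat Q A"
  shows "representable Q (point_cat Q X u) A \<phi> \<longleftrightarrow>
    (\<exists>x\<in>qobj A. qty A x = X \<and> (\<forall>a\<in>qobj A. \<phi> a u = qhm A a x))"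
proof
  assume "representable Q (point_cat Q X u) A \<phi>"
  then show "\<exists>x\<in>qobj A. qty A x = X \<and> (\<forall>a\<in>qobj A. \<phi> a u = qhm A a x)"
    unfolding representable_def is_qfunctor_def repr_dist_def point_cat_def by auto
next
  assume "\<exists>x\<in>qobj A. qty A x = X \<and> (\<forall>a\<in>qobj A. \<phi> a u = qhm A a x)"
  then obtain x where "x \<in> qobj A" "qty A x = X" "\<forall>a\<in>qobj A. \<phi> a u = qhm A a x" by blast
  with qcat_id_le[OF A] have "is_qfunctor Q (point_cat Q X u) A (\<lambda>_. x)
      \<and> (\<forall>a\<in>qobj A. \<forall>b\<in>qobj (point_cat Q X u). \<phi> a b = repr_dist A (\<lambda>_. x) a b)"
    unfolding is_qfunctor_def repr_dist_def point_cat_def by auto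
  then show "representable Q (point_cat Q X u) A \<phi>"
    unfolding representable_def by blast
qed

lemma dist_left_adjoint_comp_le:
  assumes quantaloid: "is_quantaloid Q" and adj: "dist_left_adjoint Q B A \<Phi> \<Psi>"
    and a: "a \<in> qobj A" and a': "a' \<in> qobj A" and b: "b \<in> qobj B"
  shows "qle Q (qcomp Q (\<Phi> a b) (\<Psi> b a')) (qhm A a a')"
proof -
  note [trans] = qle_trans[OF quantaloid]
  have \<Phi>: "is_distributor Q B A \<Phi>" and \<Psi>: "is_distributor Q A B \<Psi>"
    and counit: "dist_le Q A A (dist_comp Q A B A \<Phi> \<Psi>) (qhm A)"
    using adj unfolding dist_left_adjoint_def by blast+
  let ?S = "(\<lambda>y. qcomp Q (\<Phi> a y) (\<Psi> y a')) ` qobj B"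
  have S: "?S \<subseteq> qhom Q (qty A a') (qty A a)"
    using qcomp_hom[OF quantaloid distributor_hom[OF \<Psi>] distributor_hom[OF \<Phi>]] a a' by auto
  have "qle Q (qcomp Q (\<Phi> a b) (\<Psi> b a')) (qsup Q (qty A a') (qty A a) ?S)"
    using qsup_upper[OF quantaloid S] b by blast
  also have "qle Q \<dots> (qhm A a a')"
    using counit a a' unfolding dist_le_def dist_comp_def by blast
  finally show ?thesis .
qed

context
  fixes Q :: "('o, 'm) quantaloid" and A :: "('a, 'o, 'm) qcat" and B :: "('b, 'o, 'm) qcat"
    and b :: 'b
  assumes quantaloid: "is_quantaloid Q" and b: "b \<in> qobj B"
begin

lemma is_distributor_column:
  assumes \<Phi>: "is_distributor Q B A \<Phi>"
  shows "is_distributor Q (point_cat Q (qty B b) u) A (\<lambda>a _. \<Phi> a b)"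
proof -
  have "qcomp Q (\<Phi> a b) (qid Q (qty B b)) = \<Phi> a b" if "a \<in> qobj A" for a
    using qcomp_id_right[OF quantaloid distributor_hom[OF \<Phi> that b]] .
  then show ?thesis
    using \<Phi> b qle_refl[OF quantaloid] unfolding is_distributor_def point_cat_def by auto
qed

lemma is_distributor_row:
  assumes \<Psi>: "is_distributor Q A B \<Psi>"
  shows "is_distributor Q A (point_cat Q (qty B b) u) (\<lambda>_ a. \<Psi> b a)"
proof -
  have "qcomp Q (qid Q (qty B b)) (\<Psi> b a) = \<Psi> b a" if "a \<in> qobj A" for a
    using qcomp_id_left[OF quantaloid distributor_hom[OF \<Psi> b that]] .
  then show ?thesis
    using \<Psi> b qle_refl[OF quantaloid] unfolding is_distributor_def point_cat_def by auto
qed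

lemma sym_left_adjoint_column:
  assumes A: "is_qcat Q A" and B: "is_qcat Q B" and \<Phi>: "sym_left_adjoint Q B A \<Phi>"
  shows "sym_left_adjoint Q (point_cat Q (qty B b) u) A (\<lambda>a _. \<Phi> a b)"
proof -
  let ?P = "point_cat Q (qty B b) u"
  have adj: "dist_left_adjoint Q B A \<Phi> (dist_op Q \<Phi>)"
    using \<Phi> unfolding sym_left_adjoint_def .
  then have d1: "is_distributor Q B A \<Phi>" and d2: "is_distributor Q A B (dist_op Q \<Phi>)"
    and unit: "dist_le Q B B (qhm B) (dist_comp Q B A B (dist_op Q \<Phi>) \<Phi>)"
    unfolding dist_left_adjoint_def by blast+
  have op: "dist_op Q (\<lambda>a _. \<Phi> a b) = (\<lambda>_ a. dist_op Q \<Phi> b a)"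
    by (simp add: dist_op_def)
  have column_unit: "dist_le Q ?P ?P (qhm ?P) (dist_comp Q ?P A ?P (\<lambda>_ a. dist_op Q \<Phi> b a) (\<lambda>a _. \<Phi> a b))"
    using qle_trans[OF quantaloid qcat_id_le[OF B b]] unit b
    unfolding dist_le_def dist_comp_def point_cat_def by simp
  have column_counit: "dist_le Q A A (dist_comp Q A ?P A (\<lambda>a _. \<Phi> a b) (\<lambda>_ a. dist_op Q \<Phi> b a)) (qhm A)"
    unfolding dist_le_def
  proof (intro ballI)
    fix a a' assume a: "a \<in> qobj A" and a': "a' \<in> qobj A"
    have "qle Q (qcomp Q (\<Phi> a b) (dist_op Q \<Phi> b a')) (qhm A a a')"
      using dist_left_adjoint_comp_le[OF quantaloid adj a a' b] .
    then show "qle Q (dist_comp Q A ?P A (\<lambda>a _. \<Phi> a b) (\<lambda>_ a. dist_op Q \<Phi> b a) a a') (qhm A a a')"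
      unfolding dist_comp_def point_cat_def
      using qcomp_hom[OF quantaloid distributor_hom[OF d2 b a'] distributor_hom[OF d1 a b]]
      by (simp, intro qsup_least[OF quantaloid _ qcat_hom[OF A a' a]]) auto
  qed
  show ?thesis
    unfolding sym_left_adjoint_def dist_left_adjoint_def op
    using is_distributor_column[OF d1, of u] is_distributor_row[OF d2, of u] column_unit column_counit
    by blast
qed

end

text \<open>Functoriality: \<open>B(y,x) \<le> \<Phi>(Fy,y) \<circ> B(y,x) \<le> \<Phi>(Fy,x) = A(Fy,Fx)\<close>, the first step
  because \<open>1 \<le> A(Fy,Fy) = \<Phi>(Fy,y)\<close>.\<close>

lemma is_qfunctor_if_columns_represented:
  assumes quantaloid: "is_quantaloid Q" and A: "is_qcat Q A" and B: "is_qcat Q B"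
    and \<Phi>: "is_distributor Q B A \<Phi>"
    and F: "\<And>b. b \<in> qobj B \<Longrightarrow> F b \<in> qobj A \<and> qty A (F b) = qty B b"
    and \<Phi>_eq: "\<And>a b. a \<in> qobj A \<Longrightarrow> b \<in> qobj B \<Longrightarrow> \<Phi> a b = qhm A a (F b)"
  shows "is_qfunctor Q B A F"
proof -
  have "qle Q (qhm B y x) (qhm A (F y) (F x))" if x: "x \<in> qobj B" and y: "y \<in> qobj B" for x y
  proof -
    note [trans] = qle_trans[OF quantaloid]
    have "qle Q (qid Q (qty B y)) (\<Phi> (F y) y)"
      using qcat_id_le[OF A] F[OF y] \<Phi>_eq[OF _ y] by metis
    then have "qle Q (qhm B y x) (qcomp Q (\<Phi> (F y) y) (qhm B y x))"
      using le_qcomp_left_if_id_le[OF quantaloid qcat_hom[OF B x y]] by blast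
    also have "qle Q \<dots> (\<Phi> (F y) x)"
      using distributor_comp_right_le[OF \<Phi>] F x y by blast
    also have "\<dots> = qhm A (F y) (F x)"
      using \<Phi>_eq F x y by blast
    finally show ?thesis .
  qed
  then show ?thesis
    unfolding is_qfunctor_def using F by blast
qed

lemma representable_if_presheaves_representable:
  assumes quantaloid: "is_quantaloid Q" and A: "is_qcat Q A" and B: "is_qcat Q B"
    and \<Phi>: "sym_left_adjoint Q B A \<Phi>"
    and presheaves: "\<forall>X \<phi>. sym_left_adjoint Q (star_cat Q X) A \<phi> \<longrightarrow> representable Q (star_cat Q X) A \<phi>"
  shows "representable Q B A \<Phi>"
proof -
  have "\<exists>x\<in>qobj A. qty A x = qty B b \<and> (\<forall>a\<in>qobj A. \<Phi> a b = qhm A a x)"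
    if b: "b \<in> qobj B" for b
  proof -
    have "sym_left_adjoint Q (star_cat Q (qty B b)) A (\<lambda>a _. \<Phi> a b)"
      using sym_left_adjoint_column[OF quantaloid b A B \<Phi>] by (simp add: star_cat_eq_point_cat)
    with presheaves have "representable Q (point_cat Q (qty B b) ()) A (\<lambda>a _. \<Phi> a b)"
      by (simp add: star_cat_eq_point_cat)
    then show ?thesis
      by (simp add: representable_point_cat_iff[OF A])
  qed
  then have "\<forall>b\<in>qobj B. \<exists>x\<in>qobj A. qty A x = qty B b \<and> (\<forall>a\<in>qobj A. \<Phi> a b = qhm A a x)"
    by blast
  then obtain F
    where "\<forall>b\<in>qobj B. F b \<in> qobj A \<and> qty A (F b) = qty B b \<and> (\<forall>a\<in>qobj A. \<Phi> a b = qhm A a (F b))"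
    by (metis bchoice)
  then have F: "\<And>b. b \<in> qobj B \<Longrightarrow> F b \<in> qobj A \<and> qty A (F b) = qty B b"
    and \<Phi>_eq: "\<And>a b. a \<in> qobj A \<Longrightarrow> b \<in> qobj B \<Longrightarrow> \<Phi> a b = qhm A a (F b)"
    by blast+
  have "is_distributor Q B A \<Phi>"
    using \<Phi> unfolding sym_left_adjoint_def dist_left_adjoint_def by blast
  then have "is_qfunctor Q B A F"
    using is_qfunctor_if_columns_represented[OF quantaloid A B _ F \<Phi>_eq] by blast
  then show ?thesis
    unfolding representable_def repr_dist_def using \<Phi>_eq by blast
qed

lemma presheaf_representable_if_sym_left_adjoints_representable:
  assumes involutive: "is_involutive_quantaloid Q" and A: "is_qcat Q A"
    and all_B: "\<forall>B :: ('b, 'o, 'm) qcat. is_symmetric_qcat Q B \<longrightarrow>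
      (\<forall>\<Phi>. sym_left_adjoint Q B A \<Phi> \<longrightarrow> representable Q B A \<Phi>)"
    and \<phi>: "sym_left_adjoint Q (star_cat Q X) A \<phi>"
  shows "representable Q (star_cat Q X) A \<phi>"
proof -
  let ?P = "point_cat Q X (undefined :: 'b)"
  have quantaloid: "is_quantaloid Q"
    using involutive by (simp add: is_involutive_quantaloid_def)
  then have "is_qcat Q (star_cat Q X)"
    using is_qcat_point_cat by (simp add: star_cat_eq_point_cat)
  then have "sym_left_adjoint Q ?P A (\<lambda>a _. \<phi> a ())"
    using sym_left_adjoint_column[OF quantaloid _ A _ \<phi>, of "()" "undefined :: 'b"]
    by (simp add: star_cat_def)
  then have "representable Q ?P A (\<lambda>a _. \<phi> a ())"
    using all_B[rule_format, OF is_symmetric_qcat_point_cat[OF involutive]] by blast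
  then show ?thesis
    by (simp add: star_cat_eq_point_cat representable_point_cat_iff[OF A])
qed

theorem proposition3p2:
  fixes Q :: "('o, 'm) quantaloid" and A :: "('a, 'o, 'm) qcat"
  assumes "is_involutive_quantaloid Q"
    and "is_symmetric_qcat Q A"
  shows "((\<forall>B :: ('b, 'o, 'm) qcat. is_symmetric_qcat Q B \<longrightarrow> sym_complete_wrt Q A B)
            \<longleftrightarrow>
          (\<forall>B :: ('b, 'o, 'm) qcat. is_symmetric_qcat Q B \<longrightarrow>
             (\<forall>\<Phi>. sym_left_adjoint Q B A \<Phi> \<longrightarrow> representable Q B A \<Phi>)))
       \<and>
         ((\<forall>B :: ('b, 'o, 'm) qcat. is_symmetric_qcat Q B \<longrightarrow>
             (\<forall>\<Phi>. sym_left_adjoint Q B A \<Phi> \<longrightarrow> representable Q B A \<Phi>))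
            \<longleftrightarrow>
          (\<forall>X. \<forall>\<phi>. sym_left_adjoint Q (star_cat Q X) A \<phi> \<longrightarrow>
             representable Q (star_cat Q X) A \<phi>))"
proof -
  have quantaloid: "is_quantaloid Q"
    using assms(1) by (simp add: is_involutive_quantaloid_def)
  have A: "is_qcat Q A"
    using symmetric_qcat_is_qcat[OF assms(2)] .
  have "sym_complete_wrt Q A B \<longleftrightarrow> (\<forall>\<Phi>. sym_left_adjoint Q B A \<Phi> \<longrightarrow> representable Q B A \<Phi>)"
    if "is_symmetric_qcat Q B" for B :: "('b, 'o, 'm) qcat"
    using sym_complete_wrt_iff_representable[OF quantaloid assms(2) symmetric_qcat_is_qcat[OF that]] .
  moreover have "representable Q B A \<Phi>"
    if "is_symmetric_qcat Q B" and "sym_left_adjoint Q B A \<Phi>"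
      and "\<forall>X \<phi>. sym_left_adjoint Q (star_cat Q X) A \<phi> \<longrightarrow> representable Q (star_cat Q X) A \<phi>"
    for B :: "('b, 'o, 'm) qcat" and \<Phi>
    using representable_if_presheaves_representable[OF quantaloid A symmetric_qcat_is_qcat[OF that(1)] that(2,3)] .
  ultimately show ?thesis
    using presheaf_representable_if_sym_left_adjoints_representable[OF assms(1) A] by blast
qed

end
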